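(* Let $\lambda,\mu,\rho$ be partitions of $n$ with $I,J,K$ parts respectively, and let $P$ be the swap Markov chain on $\mathcal{T}_{\lambda,\mu,\rho}$ defined in the context. Then $P$ is connected (irreducible) on $\mathcal{T}_{\lambda,\mu,\rho}$ and reversible with respect to \[ \pi_{\lambda,\mu,\rho}(T)=\frac1{n!}\prod_{i,j,k}\frac{\lambda_i!\,\mu_j!\,\rho_k!}{T_{ijk}!}. \]
   Context: $\mathcal{T}_{\lambda,\mu,\rho}$ is the set of arrays $T=(T_{ijk})_{1\le i\le I,1\le j\le J,1\le k\le K}$ of nonnegative integers with $\sum_{j,k}T_{ijk}=\lambda_i$, $\sum_{i,k}T_{ijk}=\mu_j$, $\sum_{i,j}T_{ijk}=\rho_k$ for all $i,j,k$. Represent $T$ as a multiset of $n$ triples $(i,j,k)$, with $T_{ijk}$ copies of $(i,j,k)$. One step of the chain: choose two of the $n$ triples independently and uniformly at random (possibly the same one), choose $r\in\{1,2,3\}$ uniformly, and swap the $r$-th coordinates of the two chosen triples; e.g. for $r=1$, $(i_1,j_1,k_1),(i_2,j_2,k_2)\mapsto(i_2,j_1,k_1),(i_1,j_2,k_2)$. Thus the move that removes one copy each of $(i_1,j_1,k_1)$ and $(i_2,j_2,k_2)$ and adds the swapped triples is made with probability $\frac13\cdot\frac{2T_{i_1j_1k_1}T_{i_2j_2k_2}}{n^2}$. Reversibility means $\pi(T)P(T,T')=\pi(T')P(T',T)$ for all $T,T'$. *)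

theory Defs
  imports Complex_Main "HOL-Library.Multiset"
begin

type_synonym triple = "nat \<times> nat \<times> nat"

definition is_partition :: "nat \<Rightarrow> nat \<Rightarrow> (nat \<Rightarrow> nat) \<Rightarrow> bool" where
  "is_partition n I lam \<longleftrightarrow>
     (\<forall>i\<in>{1..I}. lam i > 0) \<and>
     (\<forall>i\<in>{1..I}. \<forall>i'\<in>{1..I}. i \<le> i' \<longrightarrow> lam i' \<le> lam i) \<and>
     (\<Sum>i=1..I. lam i) = n"

text \<open>The array T is represented as the multiset of triples (i,j,k), with
  count T (i,j,k) = T_ijk copies.\<close>
definition tables ::
  "nat \<Rightarrow> (nat \<Rightarrow> nat) \<Rightarrow> nat \<Rightarrow> (nat \<Rightarrow> nat) \<Rightarrow> nat \<Rightarrow> (nat \<Rightarrow> nat) \<Rightarrow> triple multiset set" where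
  "tables I lam J mu K rho =
     {T. (\<forall>(i,j,k)\<in>#T. i \<in> {1..I} \<and> j \<in> {1..J} \<and> k \<in> {1..K}) \<and>
         (\<forall>i\<in>{1..I}. (\<Sum>j=1..J. \<Sum>k=1..K. count T (i,j,k)) = lam i) \<and>
         (\<forall>j\<in>{1..J}. (\<Sum>i=1..I. \<Sum>k=1..K. count T (i,j,k)) = mu j) \<and>
         (\<forall>k\<in>{1..K}. (\<Sum>i=1..I. \<Sum>j=1..J. count T (i,j,k)) = rho k)}"

fun swap_coord :: "nat \<Rightarrow> triple \<Rightarrow> triple \<Rightarrow> triple \<times> triple" where
  "swap_coord r (i1,j1,k1) (i2,j2,k2) =
     (if r = 1 then ((i2,j1,k1),(i1,j2,k2))
      else if r = 2 then ((i1,j2,k1),(i2,j1,k2))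
      else ((i1,j1,k2),(i2,j2,k1)))"

text \<open>Result of choosing one copy of t1 and one copy of t2 and swapping the r-th
  coordinates. If t1 = t2 the swap changes nothing (this also covers choosing
  the same copy twice).\<close>
definition swap_step :: "triple multiset \<Rightarrow> triple \<Rightarrow> triple \<Rightarrow> nat \<Rightarrow> triple multiset" where
  "swap_step T t1 t2 r =
     (if t1 = t2 then T
      else T - {#t1, t2#} + {#fst (swap_coord r t1 t2), snd (swap_coord r t1 t2)#})"

text \<open>Transition probability: the n^2 ordered choices of two copies (possibly the
  same) are grouped by their types (t1,t2), there being count T t1 * count T t2
  such choices; r is uniform on {1,2,3}.\<close>
definition swap_P :: "triple multiset \<Rightarrow> triple multiset \<Rightarrow> real" where
  "swap_P T T' =
     (\<Sum>t1\<in>set_mset T. \<Sum>t2\<in>set_mset T. \<Sum>r\<in>{1,2,3::nat}.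
        if swap_step T t1 t2 r = T' then real (count T t1 * count T t2) else 0)
     / (3 * real (size T) ^ 2)"

definition swap_pi ::
  "nat \<Rightarrow> (nat \<Rightarrow> nat) \<Rightarrow> nat \<Rightarrow> (nat \<Rightarrow> nat) \<Rightarrow> nat \<Rightarrow> (nat \<Rightarrow> nat) \<Rightarrow> nat
    \<Rightarrow> triple multiset \<Rightarrow> real" where
  "swap_pi I lam J mu K rho n T =
     (1 / fact n) *
     ((\<Prod>i=1..I. fact (lam i)) * (\<Prod>j=1..J. fact (mu j)) * (\<Prod>k=1..K. fact (rho k))) /
     (\<Prod>i=1..I. \<Prod>j=1..J. \<Prod>k=1..K. fact (count T (i,j,k)))"

end

theory Submission
  imports Defs
begin

text \<open>A swap leaves the three margins of a table (the multisets of first, second and third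
  coordinates of its triples) unchanged, and the tables are exactly the multisets of triples whose
  margins are the ones prescribed by \<lambda>, \<mu>, \<rho>. Connectivity: a triple (i, j, k) compatible with
  the margins of T can be created by at most two swaps, fixing first the second and then the third
  coordinate; removing it and inducting on the size connects any two multisets with equal margins.
  Reversibility: a move T \<rightarrow> T' obtained from the ordered pair (t1, t2) and the coordinate r is
  undone by the swapped pair (s1, s2) and the same r, a bijection between the choices leading from
  T to T' and those leading back. Writing T = a + {t1, t2} and T' = a + {s1, s2}, the weight
  T(t1) T(t2) / (n^2 \<Prod>_x T(x)!) of a choice and that of its reverse both equal
  1 / (n^2 \<Prod>_x a(x)!), so P(T, T') / \<Prod>_x T(x)! is symmetric in T and T'.\<close>

definition margins :: "triple multiset \<Rightarrow> nat multiset \<times> nat multiset \<times> nat multiset" where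
  "margins T = (image_mset fst T, image_mset (fst \<circ> snd) T, image_mset (snd \<circ> snd) T)"

definition parts_mset :: "nat \<Rightarrow> (nat \<Rightarrow> nat) \<Rightarrow> nat multiset" where
  "parts_mset I lam = (\<Sum>i\<in>{1..I}. replicate_mset (lam i) i)"

lemma count_parts_mset: "count (parts_mset I lam) i = (if i \<in> {1..I} then lam i else 0)"
  by (simp add: parts_mset_def count_sum)

lemma sum_count_eq_count_image_mset:
  assumes "inj_on (case_prod h) (A \<times> B)" "finite A" "finite B"
    and "set_mset T \<inter> f -` {c} \<subseteq> case_prod h ` (A \<times> B)"
    and "\<And>a b. a \<in> A \<Longrightarrow> b \<in> B \<Longrightarrow> f (h a b) = c"
  shows "(\<Sum>(a,b)\<in>A \<times> B. count T (h a b)) = count (image_mset f T) c"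
proof -
  have "(\<Sum>(a,b)\<in>A \<times> B. count T (h a b)) = sum (count T) (case_prod h ` (A \<times> B))"
    by (simp add: sum.reindex[OF assms(1)] comp_def prod.case_distrib)
  also have "\<dots> = sum (count T) (f -` {c} \<inter> set_mset T)"
    using assms by (intro sum.mono_neutral_right) (auto simp: count_eq_zero_iff)
  also have "\<dots> = count (image_mset f T) c"
    by (rule count_image_mset[symmetric])
  finally show ?thesis .
qed

lemma slice_sums_eq_margin_counts:
  fixes T :: "triple multiset"
  assumes "set_mset T \<subseteq> {1..I} \<times> {1..J} \<times> {1..K}"
  shows "i \<in> {1..I} \<Longrightarrow> (\<Sum>j=1..J. \<Sum>k=1..K. count T (i,j,k)) = count (image_mset fst T) i"
    and "j \<in> {1..J} \<Longrightarrow> (\<Sum>i=1..I. \<Sum>k=1..K. count T (i,j,k)) = count (image_mset (fst \<circ> snd) T) j"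
    and "k \<in> {1..K} \<Longrightarrow> (\<Sum>i=1..I. \<Sum>j=1..J. count T (i,j,k)) = count (image_mset (snd \<circ> snd) T) k"
proof -
  show "i \<in> {1..I} \<Longrightarrow> (\<Sum>j=1..J. \<Sum>k=1..K. count T (i,j,k)) = count (image_mset fst T) i"
    unfolding sum.cartesian_product
    by (rule sum_count_eq_count_image_mset[where h = "\<lambda>j k. (i,j,k)"])
      (use assms in \<open>auto simp: inj_on_def image_iff\<close>)
  show "j \<in> {1..J} \<Longrightarrow> (\<Sum>i=1..I. \<Sum>k=1..K. count T (i,j,k)) = count (image_mset (fst \<circ> snd) T) j"
    unfolding sum.cartesian_product
    by (rule sum_count_eq_count_image_mset[where h = "\<lambda>i k. (i,j,k)"])
      (use assms in \<open>auto simp: inj_on_def image_iff\<close>)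
  show "k \<in> {1..K} \<Longrightarrow> (\<Sum>i=1..I. \<Sum>j=1..J. count T (i,j,k)) = count (image_mset (snd \<circ> snd) T) k"
    unfolding sum.cartesian_product
    by (rule sum_count_eq_count_image_mset[where h = "\<lambda>i j. (i,j,k)"])
      (use assms in \<open>auto simp: inj_on_def image_iff\<close>)
qed

lemma set_mset_tables:
  "T \<in> tables I lam J mu K rho \<Longrightarrow> set_mset T \<subseteq> {1..I} \<times> {1..J} \<times> {1..K}"
  unfolding tables_def by fastforce

lemma tables_eq_margins:
  "tables I lam J mu K rho = {T. margins T = (parts_mset I lam, parts_mset J mu, parts_mset K rho)}"
proof (intro set_eqI iffI)
  fix T assume T: "T \<in> tables I lam J mu K rho"
  then have box: "set_mset T \<subseteq> {1..I} \<times> {1..J} \<times> {1..K}"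
    by (rule set_mset_tables)
  have "image_mset fst T = parts_mset I lam" "image_mset (fst \<circ> snd) T = parts_mset J mu"
    "image_mset (snd \<circ> snd) T = parts_mset K rho"
    using T box slice_sums_eq_margin_counts[OF box]
    by (fastforce intro!: multiset_eqI simp: tables_def count_parts_mset count_eq_zero_iff)+
  then show "T \<in> {T. margins T = (parts_mset I lam, parts_mset J mu, parts_mset K rho)}"
    by (simp add: margins_def)
next
  fix T assume "T \<in> {T. margins T = (parts_mset I lam, parts_mset J mu, parts_mset K rho)}"
  then have m: "image_mset fst T = parts_mset I lam" "image_mset (fst \<circ> snd) T = parts_mset J mu"
    "image_mset (snd \<circ> snd) T = parts_mset K rho"
    by (simp_all add: margins_def)
  have "x \<in> {1..I} \<times> {1..J} \<times> {1..K}" if "x \<in># T" for x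
  proof -
    have "fst x \<in># parts_mset I lam" "fst (snd x) \<in># parts_mset J mu" "snd (snd x) \<in># parts_mset K rho"
      using that unfolding m[symmetric] by auto
    then show ?thesis
      by (cases x) (auto simp: count_parts_mset split: if_splits simp flip: count_greater_zero_iff)
  qed
  then have box: "set_mset T \<subseteq> {1..I} \<times> {1..J} \<times> {1..K}" by blast
  have "\<forall>i\<in>{1..I}. (\<Sum>j=1..J. \<Sum>k=1..K. count T (i,j,k)) = lam i"
    using slice_sums_eq_margin_counts(1)[OF box] by (simp add: m count_parts_mset)
  moreover have "\<forall>j\<in>{1..J}. (\<Sum>i=1..I. \<Sum>k=1..K. count T (i,j,k)) = mu j"
    using slice_sums_eq_margin_counts(2)[OF box] by (simp add: m count_parts_mset)
  moreover have "\<forall>k\<in>{1..K}. (\<Sum>i=1..I. \<Sum>j=1..J. count T (i,j,k)) = rho k"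
    using slice_sums_eq_margin_counts(3)[OF box] by (simp add: m count_parts_mset)
  ultimately show "T \<in> tables I lam J mu K rho"
    using box unfolding tables_def by blast
qed

lemma swap_coord_involutive:
  "swap_coord r t1 t2 = (s1, s2) \<Longrightarrow> swap_coord r s1 s2 = (t1, t2)"
  by (cases t1; cases t2) (auto split: if_splits)

lemma swap_coord_same: "swap_coord r t t = (t, t)"
  by (cases t) simp

lemma swap_coord_eq_iff:
  "swap_coord r t1 t2 = (s1, s2) \<Longrightarrow> s1 = s2 \<longleftrightarrow> t1 = t2"
  by (cases t1; cases t2) (auto split: if_splits)

lemma margins_swap_coord:
  "swap_coord r t1 t2 = (s1, s2) \<Longrightarrow> margins {#s1, s2#} = margins {#t1, t2#}"
  by (cases t1; cases t2) (auto simp: margins_def add_mset_commute split: if_splits)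

lemma pair_subseteq_mset: "t1 \<in># T \<Longrightarrow> t2 \<in># T \<Longrightarrow> t1 \<noteq> t2 \<Longrightarrow> {#t1, t2#} \<subseteq># T"
  by (simp add: insert_subset_eq_iff in_diff_count)

lemma swap_step_eq:
  assumes "t1 \<in># T" "t2 \<in># T" "t1 \<noteq> t2" "swap_coord r t1 t2 = (s1, s2)"
  shows "T = add_mset t1 (add_mset t2 (T - {#t1, t2#}))"
    and "swap_step T t1 t2 r = add_mset s1 (add_mset s2 (T - {#t1, t2#}))"
proof -
  have "{#t1, t2#} \<subseteq># T"
    using assms(1-3) by (rule pair_subseteq_mset)
  then show "T = add_mset t1 (add_mset t2 (T - {#t1, t2#}))"
    using subset_mset.diff_add by fastforce
  show "swap_step T t1 t2 r = add_mset s1 (add_mset s2 (T - {#t1, t2#}))"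
    using assms(3,4) by (simp add: swap_step_def)
qed

lemma margins_add_cong: "margins B = margins C \<Longrightarrow> margins (A + B) = margins (A + C)"
  by (simp add: margins_def)

lemma margins_swap_step:
  assumes "t1 \<in># T" "t2 \<in># T"
  shows "margins (swap_step T t1 t2 r) = margins T"
proof (cases "t1 = t2")
  case True
  then show ?thesis by (simp add: swap_step_def)
next
  case False
  obtain s1 s2 where s: "swap_coord r t1 t2 = (s1, s2)" by (cases "swap_coord r t1 t2")
  have "margins (swap_step T t1 t2 r) = margins (T - {#t1, t2#} + {#s1, s2#})"
    using swap_step_eq(2)[OF assms False s] by simp
  also have "\<dots> = margins (T - {#t1, t2#} + {#t1, t2#})"
    using margins_swap_coord[OF s] by (rule margins_add_cong)
  also have "\<dots> = margins T"
    using swap_step_eq(1)[OF assms False s, symmetric] by simp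
  finally show ?thesis .
qed

lemma fst_swap_coord_in_swap_step:
  assumes "t1 \<in># T" "t2 \<in># T"
  shows "fst (swap_coord r t1 t2) \<in># swap_step T t1 t2 r"
proof (cases "t1 = t2")
  case True
  then show ?thesis using assms by (simp add: swap_step_def swap_coord_same)
next
  case False
  then show ?thesis by (simp add: swap_step_def)
qed

lemma swap_step_add_mset:
  assumes "t1 \<in># T" "t2 \<in># T"
  shows "swap_step (add_mset t T) t1 t2 r = add_mset t (swap_step T t1 t2 r)"
proof (cases "t1 = t2")
  case True
  then show ?thesis by (simp add: swap_step_def)
next
  case False
  then have "{#t1, t2#} \<subseteq># T"
    using assms by (intro pair_subseteq_mset)
  then have "add_mset t T - {#t1, t2#} = add_mset t (T - {#t1, t2#})"
    using subset_mset.diff_add_assoc[of "{#t1, t2#}" T "{#t#}"] by simp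
  then show ?thesis using False by (simp add: swap_step_def)
qed

definition swap_moves :: "(triple multiset \<times> triple multiset) set" where
  "swap_moves = {(T, swap_step T t1 t2 r) | T t1 t2 r. t1 \<in># T \<and> t2 \<in># T \<and> r \<in> {1, 2, 3}}"

lemma swap_moveI:
  "t1 \<in># T \<Longrightarrow> t2 \<in># T \<Longrightarrow> r \<in> {1, 2, 3} \<Longrightarrow> (T, swap_step T t1 t2 r) \<in> swap_moves"
  unfolding swap_moves_def by blast

lemma margins_swap_moves: "(T, T') \<in> swap_moves \<Longrightarrow> margins T' = margins T"
  unfolding swap_moves_def by (auto simp: margins_swap_step)

lemma swap_moves_add_mset:
  assumes "(T, T') \<in> swap_moves\<^sup>*"
  shows "(add_mset t T, add_mset t T') \<in> swap_moves\<^sup>*"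
  using assms
proof (induction rule: rtrancl_induct)
  case base
  then show ?case by simp
next
  case (step T' T'')
  then obtain t1 t2 r where "t1 \<in># T'" "t2 \<in># T'" "r \<in> {1, 2, 3}" "T'' = swap_step T' t1 t2 r"
    unfolding swap_moves_def by blast
  then have "(add_mset t T', add_mset t T'') \<in> swap_moves"
    using swap_moveI[of t1 "add_mset t T'" t2 r] by (simp add: swap_step_add_mset)
  with step.IH show ?case by simp
qed

lemma swap_moves_reach_triple:
  assumes "i \<in># image_mset fst T" "j \<in># image_mset (fst \<circ> snd) T" "k \<in># image_mset (snd \<circ> snd) T"
  obtains T' where "(T, T') \<in> swap_moves\<^sup>*" "margins T' = margins T" "(i, j, k) \<in># T'"
proof -
  obtain y z u w where iyz: "(i, y, z) \<in># T" and ujw: "(u, j, w) \<in># T"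
    using assms(1,2) by fastforce
  define T1 where "T1 = swap_step T (i, y, z) (u, j, w) 2"
  have T1: "(T, T1) \<in> swap_moves" "margins T1 = margins T" "(i, j, z) \<in># T1"
    unfolding T1_def using swap_moveI[OF iyz ujw] margins_swap_step[OF iyz ujw]
      fst_swap_coord_in_swap_step[OF iyz ujw, of 2] by auto
  have "k \<in># image_mset (snd \<circ> snd) T1"
    using assms(3) T1(2) by (simp add: margins_def)
  then obtain p q where pqk: "(p, q, k) \<in># T1" by fastforce
  define T2 where "T2 = swap_step T1 (i, j, z) (p, q, k) 3"
  have T2: "(T1, T2) \<in> swap_moves" "margins T2 = margins T1" "(i, j, k) \<in># T2"
    unfolding T2_def using swap_moveI[OF T1(3) pqk] margins_swap_step[OF T1(3) pqk]
      fst_swap_coord_in_swap_step[OF T1(3) pqk, of 3] by auto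
  from T1 T2 show ?thesis
    by (intro that[of T2]) auto
qed

lemma swap_moves_connect_equal_margins:
  "margins T = margins T' \<Longrightarrow> (T, T') \<in> swap_moves\<^sup>*"
proof (induction T' arbitrary: T rule: multiset_induct)
  case empty
  then show ?case by (simp add: margins_def)
next
  case (add t T')
  obtain i j k where t: "t = (i, j, k)" by (cases t)
  have "i \<in># image_mset fst T" "j \<in># image_mset (fst \<circ> snd) T" "k \<in># image_mset (snd \<circ> snd) T"
    using add.prems by (auto simp: margins_def t)
  then obtain T1 where T1: "(T, T1) \<in> swap_moves\<^sup>*" "margins T1 = margins T" "t \<in># T1"
    unfolding t by (rule swap_moves_reach_triple)
  then have T1_eq: "T1 = add_mset t (T1 - {#t#})" by simp
  have "margins (add_mset t (T1 - {#t#})) = margins (add_mset t T')"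
    using add.prems T1(2) T1_eq by simp
  then have "margins (T1 - {#t#}) = margins T'"
    by (simp add: margins_def)
  then have "(add_mset t (T1 - {#t#}), add_mset t T') \<in> swap_moves\<^sup>*"
    using add.IH by (intro swap_moves_add_mset) blast
  with T1(1) T1_eq show ?case by simp
qed

definition swap_choices :: "triple multiset \<Rightarrow> triple multiset \<Rightarrow> (triple \<times> triple \<times> nat) set" where
  "swap_choices T T' =
     {(t1, t2, r) \<in> set_mset T \<times> set_mset T \<times> {1, 2, 3}. swap_step T t1 t2 r = T'}"

lemma finite_swap_choices: "finite (swap_choices T T')"
  by (rule finite_subset[of _ "set_mset T \<times> set_mset T \<times> {1, 2, 3}"])
    (auto simp: swap_choices_def)

lemma swap_P_eq_sum:
  "swap_P T T' = (\<Sum>(t1, t2, r)\<in>swap_choices T T'. real (count T t1 * count T t2)) / (3 * real (size T) ^ 2)"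
proof -
  have "(\<Sum>t1\<in>set_mset T. \<Sum>t2\<in>set_mset T. \<Sum>r\<in>{1, 2, 3::nat}.
          if swap_step T t1 t2 r = T' then real (count T t1 * count T t2) else 0)
      = (\<Sum>(t1, t2, r)\<in>set_mset T \<times> set_mset T \<times> {1, 2, 3}.
          if swap_step T t1 t2 r = T' then real (count T t1 * count T t2) else 0)"
    unfolding sum.cartesian_product ..
  also have "\<dots> = (\<Sum>(t1, t2, r)\<in>{z \<in> set_mset T \<times> set_mset T \<times> {1, 2, 3}.
                        (\<lambda>(t1, t2, r). swap_step T t1 t2 r = T') z}.
                        real (count T t1 * count T t2))"
    by (subst sum.inter_filter) (auto intro!: sum.cong split: prod.splits)
  also have "{z \<in> set_mset T \<times> set_mset T \<times> {1, 2, 3}. (\<lambda>(t1, t2, r). swap_step T t1 t2 r = T') z}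
      = swap_choices T T'"
    by (auto simp: swap_choices_def)
  finally show ?thesis
    by (simp add: swap_P_def)
qed

lemma swap_P_pos: "(T, T') \<in> swap_moves \<Longrightarrow> 0 < swap_P T T'"
proof -
  assume "(T, T') \<in> swap_moves"
  then obtain t1 t2 r where z: "(t1, t2, r) \<in> swap_choices T T'"
    unfolding swap_moves_def swap_choices_def by blast
  then have "T \<noteq> {#}"
    by (auto simp: swap_choices_def)
  moreover have "0 < (\<Sum>(t1, t2, r)\<in>swap_choices T T'. real (count T t1 * count T t2))"
  proof (rule sum_pos[OF finite_swap_choices])
    show "swap_choices T T' \<noteq> {}" using z by blast
  qed (auto simp: swap_choices_def)
  ultimately show ?thesis
    by (simp add: swap_P_eq_sum)
qed

definition fact_count_prod :: "'a multiset \<Rightarrow> real" where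
  "fact_count_prod T = (\<Prod>x\<in>set_mset T. fact (count T x))"

lemma fact_count_prod_add_mset:
  "fact_count_prod (add_mset x T) = (count T x + 1) * fact_count_prod T"
proof -
  let ?rest = "\<Prod>y\<in>set_mset T - {x}. fact (count T y) :: real"
  have "fact_count_prod T = fact (count T x) * ?rest"
    unfolding fact_count_prod_def
    by (cases "x \<in># T") (simp_all add: prod.remove not_in_iff)
  moreover have "(\<Prod>y\<in>set_mset T - {x}. fact (count (add_mset x T) y)) = ?rest"
    by (intro prod.cong) auto
  then have "fact_count_prod (add_mset x T) = fact (count T x + 1) * ?rest"
    unfolding fact_count_prod_def by (simp add: prod.insert_remove)
  ultimately show ?thesis
    by simp
qed

lemma pair_weight_add_mset:
  fixes a :: "'a multiset"
  assumes "t1 \<noteq> t2"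
  defines "A \<equiv> add_mset t1 (add_mset t2 a)"
  shows "real (count A t1 * count A t2) / (real (size A) ^ 2 * fact_count_prod A)
       = 1 / ((real (size a) + 2) ^ 2 * fact_count_prod a)"
proof -
  define c where "c = real (count A t1 * count A t2)"
  have "fact_count_prod A = c * fact_count_prod a"
    using assms by (simp add: c_def fact_count_prod_add_mset algebra_simps)
  moreover have "0 < c"
    unfolding c_def of_nat_0_less_iff using assms by (simp add: A_def)
  moreover have "real (size A) = real (size a) + 2"
    by (simp add: A_def)
  ultimately show ?thesis
    unfolding c_def[symmetric] by simp
qed

definition reverse_choice :: "triple \<times> triple \<times> nat \<Rightarrow> triple \<times> triple \<times> nat" where
  "reverse_choice = (\<lambda>(t1, t2, r). (fst (swap_coord r t1 t2), snd (swap_coord r t1 t2), r))"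

lemma reverse_choice_involutive: "reverse_choice (reverse_choice z) = z"
proof -
  obtain t1 t2 r where z: "z = (t1, t2, r)" by (cases z)
  obtain s1 s2 where s: "swap_coord r t1 t2 = (s1, s2)" by (cases "swap_coord r t1 t2")
  show ?thesis
    by (simp add: z s reverse_choice_def swap_coord_involutive[OF s])
qed

lemma swap_choice_decomp:
  assumes "(t1, t2, r) \<in> swap_choices T T'" "T \<noteq> T'" "swap_coord r t1 t2 = (s1, s2)"
  obtains a where "t1 \<noteq> t2" "s1 \<noteq> s2"
    and "T = add_mset t1 (add_mset t2 a)" "T' = add_mset s1 (add_mset s2 a)"
proof -
  have mem: "t1 \<in># T" "t2 \<in># T" and step: "swap_step T t1 t2 r = T'"
    using assms(1) by (auto simp: swap_choices_def)
  have ne: "t1 \<noteq> t2"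
    using assms(2) step by (auto simp: swap_step_def)
  show ?thesis
  proof
    show "t1 \<noteq> t2" by (fact ne)
    show "s1 \<noteq> s2"
      using swap_coord_eq_iff[OF assms(3)] ne by simp
    show "T = add_mset t1 (add_mset t2 (T - {#t1, t2#}))"
      by (rule swap_step_eq(1)[OF mem ne assms(3)])
    show "T' = add_mset s1 (add_mset s2 (T - {#t1, t2#}))"
      using swap_step_eq(2)[OF mem ne assms(3)] step by simp
  qed
qed

lemma reverse_choice_in_swap_choices:
  assumes "z \<in> swap_choices T T'" "T \<noteq> T'"
  shows "reverse_choice z \<in> swap_choices T' T"
proof -
  obtain t1 t2 r where z: "z = (t1, t2, r)" by (cases z)
  obtain s1 s2 where s: "swap_coord r t1 t2 = (s1, s2)" by (cases "swap_coord r t1 t2")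
  obtain a where ne: "s1 \<noteq> s2"
    and T: "T = add_mset t1 (add_mset t2 a)" and T': "T' = add_mset s1 (add_mset s2 a)"
    using swap_choice_decomp[OF assms(1)[unfolded z] assms(2) s] .
  have "swap_step T' s1 s2 r = T"
    using ne swap_coord_involutive[OF s] by (simp add: swap_step_def T T')
  moreover have "s1 \<in># T'" "s2 \<in># T'" "r \<in> {1, 2, 3}"
    using assms(1) by (auto simp: T' z swap_choices_def)
  ultimately show ?thesis
    by (simp add: z s reverse_choice_def swap_choices_def)
qed

lemma swap_P_detailed_balance:
  "swap_P T T' / fact_count_prod T = swap_P T' T / fact_count_prod T'"
proof (cases "T = T'")
  case True
  then show ?thesis by simp
next
  case False
  define w :: "triple multiset \<Rightarrow> triple \<times> triple \<times> nat \<Rightarrow> real" where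
    "w M = (\<lambda>(t1, t2, r). real (count M t1 * count M t2) / (real (size M) ^ 2 * fact_count_prod M))"
    for M
  have P_eq: "swap_P M M' / fact_count_prod M = (\<Sum>z\<in>swap_choices M M'. w M z) / 3" for M M'
    by (simp add: swap_P_eq_sum w_def sum_divide_distrib case_prod_unfold mult_ac)
  have "(\<Sum>z\<in>swap_choices T T'. w T z) = (\<Sum>z\<in>swap_choices T' T. w T' z)"
  proof (rule sum.reindex_bij_witness[of _ reverse_choice reverse_choice])
    fix z assume z_mem: "z \<in> swap_choices T T'"
    obtain t1 t2 r where z: "z = (t1, t2, r)" by (cases z)
    obtain s1 s2 where s: "swap_coord r t1 t2 = (s1, s2)" by (cases "swap_coord r t1 t2")
    obtain a where ne: "t1 \<noteq> t2" and ne': "s1 \<noteq> s2"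
      and T: "T = add_mset t1 (add_mset t2 a)" and T': "T' = add_mset s1 (add_mset s2 a)"
      using swap_choice_decomp[OF z_mem[unfolded z] False s] .
    have "w T z = 1 / ((real (size a) + 2) ^ 2 * fact_count_prod a)"
      unfolding w_def T z prod.case by (rule pair_weight_add_mset[OF ne])
    moreover have "w T' (reverse_choice z) = 1 / ((real (size a) + 2) ^ 2 * fact_count_prod a)"
      unfolding w_def T' z reverse_choice_def s prod.case fst_conv snd_conv
      by (rule pair_weight_add_mset[OF ne'])
    ultimately show "w T' (reverse_choice z) = w T z"
      by simp
  qed (use False reverse_choice_involutive reverse_choice_in_swap_choices in auto)
  then show ?thesis
    by (simp only: P_eq)
qed

lemma swap_pi_eq:
  fixes T :: "triple multiset"
  assumes "set_mset T \<subseteq> {1..I} \<times> {1..J} \<times> {1..K}"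
  shows "swap_pi I lam J mu K rho n T = swap_pi I lam J mu K rho n {#} / fact_count_prod T"
proof -
  have "(\<Prod>i=1..I. \<Prod>j=1..J. \<Prod>k=1..K. fact (count T (i,j,k)))
      = (\<Prod>x\<in>{1..I} \<times> {1..J} \<times> {1..K}. fact (count T x) :: real)"
    by (simp add: prod.cartesian_product split_def)
  also have "\<dots> = fact_count_prod T"
    unfolding fact_count_prod_def using assms
    by (intro prod.mono_neutral_right) (auto simp: not_in_iff)
  finally show ?thesis
    by (simp add: swap_pi_def)
qed

lemma rtrancl_restrict_closed:
  assumes "(x, y) \<in> r\<^sup>*" "x \<in> S" "\<And>a b. a \<in> S \<Longrightarrow> (a, b) \<in> r \<Longrightarrow> b \<in> S"
  shows "(x, y) \<in> {(a, b) \<in> r. a \<in> S}\<^sup>*"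
proof -
  have "y \<in> S \<and> (x, y) \<in> {(a, b) \<in> r. a \<in> S}\<^sup>*"
    using assms(1)
  proof (induction rule: rtrancl_induct)
    case base
    then show ?case using assms(2) by simp
  next
    case (step y z)
    then show ?case using assms(3) by (auto intro: rtrancl_into_rtrancl)
  qed
  then show ?thesis by simp
qed

theorem theorem5p1:
  fixes n I J K :: nat and lam mu rho :: "nat \<Rightarrow> nat"
  assumes "is_partition n I lam" and "is_partition n J mu" and "is_partition n K rho"
  shows "(\<forall>T\<in>tables I lam J mu K rho. \<forall>T'\<in>tables I lam J mu K rho.
            (T, T') \<in> {(A, B). A \<in> tables I lam J mu K rho \<and> swap_P A B > 0}\<^sup>*)
       \<and> (\<forall>T\<in>tables I lam J mu K rho. \<forall>T'\<in>tables I lam J mu K rho.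
            swap_pi I lam J mu K rho n T * swap_P T T' =
            swap_pi I lam J mu K rho n T' * swap_P T' T)"
proof (intro conjI ballI)
  let ?tables = "tables I lam J mu K rho"
  fix T T' assume T: "T \<in> ?tables" and T': "T' \<in> ?tables"
  have "(T, T') \<in> swap_moves\<^sup>*"
    using T T' by (intro swap_moves_connect_equal_margins) (simp add: tables_eq_margins)
  then have "(T, T') \<in> {(A, B) \<in> swap_moves. A \<in> ?tables}\<^sup>*"
    using T by (rule rtrancl_restrict_closed) (simp add: tables_eq_margins margins_swap_moves)
  moreover have "{(A, B) \<in> swap_moves. A \<in> ?tables} \<subseteq> {(A, B). A \<in> ?tables \<and> swap_P A B > 0}"
    using swap_P_pos by auto
  ultimately show "(T, T') \<in> {(A, B). A \<in> ?tables \<and> swap_P A B > 0}\<^sup>*"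
    using rtrancl_mono by blast
next
  let ?pi = "swap_pi I lam J mu K rho n"
  fix T T' assume T: "T \<in> tables I lam J mu K rho" and T': "T' \<in> tables I lam J mu K rho"
  have "?pi T * swap_P T T' = ?pi {#} * (swap_P T T' / fact_count_prod T)"
    by (simp add: swap_pi_eq[OF set_mset_tables[OF T]])
  also have "\<dots> = ?pi {#} * (swap_P T' T / fact_count_prod T')"
    by (simp only: swap_P_detailed_balance)
  also have "\<dots> = ?pi T' * swap_P T' T"
    by (simp add: swap_pi_eq[OF set_mset_tables[OF T']])
  finally show "?pi T * swap_P T T' = ?pi T' * swap_P T' T" .
qed

end
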